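(* For $\mu>0$, $x\ge 0$, $y>0$, $$P_{\mu+1}(x,y)^2-P_\mu(x,y)P_{\mu+2}(x,y)>0.$$
   Context: For $\mu>0$, $x>0$, $y\ge0$, $P_{\mu}(x,y)=x^{\frac12(1-\mu)}\int_0^{y} t^{\frac12(\mu-1)}e^{-t-x}I_{\mu-1}(2\sqrt{xt})\,dt$ ($I_\nu$ the modified Bessel function of the first kind); at $x=0$ it is defined by continuity, $P_\mu(0,y)=\gamma(\mu,y)/\Gamma(\mu)$ with $\gamma(\mu,y)=\int_0^y t^{\mu-1}e^{-t}dt$. *)

theory Defs
  imports "HOL-Analysis.Analysis"
begin

definition besselI :: "real \<Rightarrow> real \<Rightarrow> real" where
  "besselI nu z = (\<Sum>k. (z/2) powr (2 * real k + nu) / (fact k * Gamma (real k + nu + 1)))"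

definition lower_gamma :: "real \<Rightarrow> real \<Rightarrow> real" where
  "lower_gamma mu y = integral {0..y} (\<lambda>t. t powr (mu - 1) * exp (- t))"

text \<open>Generalized Marcum-type function P_mu(x,y); at x = 0 defined by continuity.\<close>
definition marcumP :: "real \<Rightarrow> real \<Rightarrow> real \<Rightarrow> real" where
  "marcumP mu x y =
     (if x = 0 then lower_gamma mu y / Gamma mu
      else x powr ((1 - mu) / 2) *
        integral {0..y} (\<lambda>t. t powr ((mu - 1) / 2) * exp (- t - x) *
                               besselI (mu - 1) (2 * sqrt (x * t))))"

end

theory Submission
  imports Defs
begin

text \<open>
  Expanding the Bessel function and integrating termwise gives
  P_mu(x,y) = sum_n e^(-x) x^n / n! * gamma(mu+n,y) / Gamma(mu+n).
  Since a gamma(a,y) - gamma(a+1,y) = y^a e^(-y), the differences of p_k = P_(mu+k)(x,y) are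
  p_k - p_(k+1) = e^(-x-y) y^(mu+k) D_(mu+k+1)(xy), where D_b(s) = sum_k s^k / (k! Gamma(k+b)).
  In the Cauchy product, the coefficient of s^n in D_(b+1)^2 - D_b D_(b+2) has the form
  sum_(i<=m) (m-2i)(m-i) w_i, m = n+1, with weights symmetric under i |-> m-i, which equals
  sum_(i<=m) (m-2i)^2 w_i / 2 >= 0; the constant coefficient is positive. So the differences of the
  decreasing null sequence p are strictly log-concave, and that forces p_1^2 > p_0 p_2.
\<close>

lemma turan_of_log_concave_differences:
  fixes p :: "nat \<Rightarrow> real"
  assumes decreasing: "\<And>k. p (Suc k) < p k"
    and log_concave: "\<And>k. (p k - p (Suc k)) * (p (Suc (Suc k)) - p (Suc (Suc (Suc k))))
                              < (p (Suc k) - p (Suc (Suc k)))\<^sup>2"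
    and lim: "p \<longlonglongrightarrow> 0"
  shows "p 0 * p 2 < (p 1)\<^sup>2"
proof -
  \<comment> \<open>With \<open>d k = p k - p (Suc k)\<close> one has \<open>p 1\<^sup>2 - p 0 * p 2 = d 1 * p 0 - d 0 * p 1\<close>;
     compare \<open>p 0 = (\<Sum>k. d k)\<close> and \<open>p 1 = (\<Sum>k. d (Suc k))\<close> termwise, using that
     the ratios \<open>d (Suc k) / d k\<close> decrease.\<close>
  define d where "d k = p k - p (Suc k)" for k
  have d_pos: "0 < d k" for k
    using decreasing by (simp add: d_def)
  have ratio_step: "d (Suc (Suc k)) / d (Suc k) < d (Suc k) / d k" for k
    using log_concave[of k] d_pos[of k] d_pos[of "Suc k"]
    by (simp add: d_def divide_simps power2_eq_square mult.commute)
  have "decseq (\<lambda>k. d (Suc k) / d k)"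
    using ratio_step by (intro decseq_SucI less_imp_le)
  then have ratio_le: "d (Suc k) / d k \<le> d 1 / d 0" for k
    by (simp add: decseq_def)
  have terms_nonneg: "0 \<le> d 1 * d k - d 0 * d (Suc k)" for k
    using ratio_le[of k] d_pos[of k] d_pos[of 0] by (simp add: divide_le_eq le_divide_eq mult.commute)
  have term1_pos: "0 < d 1 * d 1 - d 0 * d 2"
    using log_concave[of 0] by (simp add: d_def numeral_2_eq_2 power2_eq_square)
  have "d sums p 0"
    using telescope_sums'[OF lim] by (simp add: d_def[abs_def])
  moreover have "(\<lambda>k. d (Suc k)) sums p 1"
    using telescope_sums'[OF LIMSEQ_Suc[OF lim]] by (simp add: d_def)
  ultimately have "(\<lambda>k. d 1 * d k - d 0 * d (Suc k)) sums (d 1 * p 0 - d 0 * p 1)"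
    by (intro sums_diff sums_mult)
  then have "0 < d 1 * p 0 - d 0 * p 1"
    using suminf_pos2[of "\<lambda>k. d 1 * d k - d 0 * d (Suc k)" 1] terms_nonneg term1_pos
    by (simp add: sums_iff numeral_2_eq_2)
  then show ?thesis
    by (simp add: d_def numeral_2_eq_2 power2_eq_square algebra_simps)
qed

lemma Gamma_plus1_pos:
  fixes z :: real
  assumes "0 < z"
  shows "Gamma (z + 1) = z * Gamma z"
  using assms by (intro Gamma_plus1) (auto elim!: nonpos_Ints_cases)

lemma Gamma_add_nat_ge:
  fixes b :: real
  assumes "1 \<le> b"
  shows "Gamma b * fact n \<le> Gamma (b + real n)"
proof (induction n)
  case (Suc n)
  have "Gamma b * fact (Suc n) = (real n + 1) * (Gamma b * fact n)"
    by (simp add: algebra_simps)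
  also have "\<dots> \<le> (b + real n) * Gamma (b + real n)"
    using Suc assms by (intro mult_mono) auto
  also have "\<dots> = Gamma (b + real (Suc n))"
    using Gamma_plus1_pos[of "b + real n"] assms by (simp add: add_ac)
  finally show ?case .
qed simp

lemma continuous_on_powr_const_exponent:
  fixes a :: real
  assumes "0 < a" and "\<And>t. t \<in> S \<Longrightarrow> 0 \<le> t"
  shows "continuous_on S (\<lambda>t. t powr a)"
  using assms by (intro continuous_on_powr') (auto intro: continuous_intros)

lemma has_integral_deriv_powr_exp:
  fixes a y :: real
  assumes "0 < a" and "0 \<le> y"
  shows "((\<lambda>t. a * (t powr (a - 1) * exp (- t)) - t powr a * exp (- t))
           has_integral (y powr a * exp (- y))) {0..y}"
proof -
  have "((\<lambda>t. a * (t powr (a - 1) * exp (- t)) - t powr a * exp (- t)) has_integral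
        ((\<lambda>t. t powr a * exp (- t)) y - (\<lambda>t. t powr a * exp (- t)) 0)) {0..y}"
  proof (rule fundamental_theorem_of_calculus_interior)
    fix t assume "t \<in> {0<..<y}"
    then have "((\<lambda>t. t powr a) has_real_derivative a * t powr (a - 1)) (at t)"
      by (intro has_real_derivative_powr) auto
    moreover have "((\<lambda>t. exp (- t)) has_real_derivative exp (- t) * (- 1)) (at t)"
      by (auto intro!: derivative_eq_intros)
    ultimately have "((\<lambda>t. t powr a * exp (- t)) has_real_derivative
                 a * t powr (a - 1) * exp (- t) + t powr a * (exp (- t) * (- 1))) (at t)"
      by (rule DERIV_mult[THEN DERIV_cong]) (simp add: algebra_simps)
    then show "((\<lambda>t. t powr a * exp (- t)) has_vector_derivative
                 a * (t powr (a - 1) * exp (- t)) - t powr a * exp (- t)) (at t)"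
      by (simp add: has_real_derivative_iff_has_vector_derivative[symmetric] algebra_simps)
  qed (use assms in \<open>auto intro!: continuous_on_mult continuous_on_powr_const_exponent
                                       continuous_intros\<close>)
  then show ?thesis
    using assms by simp
qed

lemma lower_gamma_integrable:
  fixes a y :: real
  assumes "0 < a" and "0 \<le> y"
  shows "(\<lambda>t. t powr (a - 1) * exp (- t)) integrable_on {0..y}"
proof -
  have "(\<lambda>t. t powr a * exp (- t)) integrable_on {0..y}"
    using assms
    by (intro integrable_continuous_interval continuous_on_mult continuous_on_powr_const_exponent
        continuous_intros) auto
  with has_integral_integrable[OF has_integral_deriv_powr_exp[OF assms]]
  have "(\<lambda>t. (a * (t powr (a - 1) * exp (- t)) - t powr a * exp (- t)) + t powr a * exp (- t))
          integrable_on {0..y}"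
    by (rule integrable_add)
  then have "(\<lambda>t. a * (t powr (a - 1) * exp (- t))) integrable_on {0..y}"
    by (simp del: integrable_on_cmult_iff)
  then show ?thesis
    using assms by simp
qed

lemma lower_gamma_recurrence:
  fixes a y :: real
  assumes "0 < a" and "0 \<le> y"
  shows "a * lower_gamma a y - lower_gamma (a + 1) y = y powr a * exp (- y)"
proof -
  have "(\<lambda>t. t powr ((a + 1) - 1) * exp (- t)) integrable_on {0..y}"
    using assms by (intro lower_gamma_integrable) auto
  then have "integral {0..y} (\<lambda>t. a * (t powr (a - 1) * exp (- t)) - t powr a * exp (- t))
               = a * lower_gamma a y - lower_gamma (a + 1) y"
    unfolding lower_gamma_def
    using integrable_on_mult_right[OF lower_gamma_integrable[OF assms], of a]
    by (subst integral_diff) auto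
  then show ?thesis
    using has_integral_deriv_powr_exp[OF assms] by (simp add: has_integral_iff)
qed

lemma lower_gamma_nonneg: "0 < a \<Longrightarrow> 0 \<le> y \<Longrightarrow> 0 \<le> lower_gamma a y"
  unfolding lower_gamma_def by (intro integral_nonneg lower_gamma_integrable) auto

lemma lower_gamma_le:
  fixes a y :: real
  assumes "0 < a" and "0 \<le> y"
  shows "lower_gamma a y \<le> y powr a / a"
proof -
  have "((\<lambda>t. t powr (a - 1)) has_integral ((\<lambda>t. t powr a / a) y - (\<lambda>t. t powr a / a) 0)) {0..y}"
  proof (rule fundamental_theorem_of_calculus_interior)
    fix t assume "t \<in> {0<..<y}"
    then have "((\<lambda>t. t powr a / a) has_real_derivative (a * t powr (a - 1) / a)) (at t)"
      by (intro DERIV_cdivide has_real_derivative_powr) auto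
    then show "((\<lambda>t. t powr a / a) has_vector_derivative (t powr (a - 1))) (at t)"
      using assms by (simp add: has_real_derivative_iff_has_vector_derivative[symmetric])
  qed (use assms in \<open>auto intro!: continuous_on_divide continuous_on_powr_const_exponent
                                       continuous_intros\<close>)
  then have power_integral: "((\<lambda>t. t powr (a - 1)) has_integral (y powr a / a)) {0..y}"
    using assms by simp
  have "lower_gamma a y \<le> integral {0..y} (\<lambda>t. t powr (a - 1))"
    unfolding lower_gamma_def
    using lower_gamma_integrable[OF assms] has_integral_integrable[OF power_integral]
    by (rule integral_le) (auto simp: mult_left_le)
  with power_integral show ?thesis
    by (simp add: integral_unique)
qed

definition reg_lower_gamma :: "real \<Rightarrow> real \<Rightarrow> real" where
  "reg_lower_gamma a y = lower_gamma a y / Gamma a"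

lemma reg_lower_gamma_nonneg: "0 < a \<Longrightarrow> 0 \<le> y \<Longrightarrow> 0 \<le> reg_lower_gamma a y"
  unfolding reg_lower_gamma_def by (simp add: lower_gamma_nonneg)

lemma reg_lower_gamma_le:
  assumes "0 < a" and "0 \<le> y"
  shows "reg_lower_gamma a y \<le> y powr a / Gamma (a + 1)"
proof -
  have "reg_lower_gamma a y \<le> (y powr a / a) / Gamma a"
    unfolding reg_lower_gamma_def using lower_gamma_le[OF assms] assms
    by (intro divide_right_mono) auto
  then show ?thesis
    using Gamma_plus1_pos[OF assms(1)] by simp
qed

lemma reg_lower_gamma_diff:
  assumes "0 < a" and "0 \<le> y"
  shows "reg_lower_gamma a y - reg_lower_gamma (a + 1) y = y powr a * exp (- y) / Gamma (a + 1)"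
proof -
  have "reg_lower_gamma a y - reg_lower_gamma (a + 1) y
          = (a * lower_gamma a y - lower_gamma (a + 1) y) / Gamma (a + 1)"
    unfolding reg_lower_gamma_def Gamma_plus1_pos[OF assms(1)]
    using assms by (simp add: diff_divide_distrib)
  then show ?thesis
    using lower_gamma_recurrence[OF assms] by simp
qed

lemma reg_lower_gamma_add_nat_le:
  assumes "0 < a" and "0 \<le> y"
  shows "reg_lower_gamma (a + real n) y \<le> reg_lower_gamma a y"
proof (induction n)
  case (Suc n)
  have "0 \<le> reg_lower_gamma (a + real n) y - reg_lower_gamma (a + real n + 1) y"
    using reg_lower_gamma_diff[of "a + real n" y] assms by simp
  with Suc show ?case
    by (simp add: add_ac)
qed simp

definition bessel_series :: "real \<Rightarrow> real \<Rightarrow> real" where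
  "bessel_series b s = (\<Sum>k. s ^ k / (fact k * Gamma (real k + b)))"

lemma summable_bessel_series:
  fixes b s :: real
  assumes "0 < b"
  shows "summable (\<lambda>k. s ^ k / (fact k * Gamma (real k + b)))"
proof (rule summable_comparison_test'[where N = 1])
  show "summable (\<lambda>k. (1 / Gamma (b + 1)) * (inverse (fact k) * \<bar>s\<bar> ^ k))"
    by (intro summable_mult summable_exp)
next
  fix k :: nat assume "1 \<le> k"
  then have "Gamma (b + 1) * fact (k - 1) \<le> Gamma (real k + b)"
    using Gamma_add_nat_ge[of "b + 1" "k - 1"] assms by (simp add: of_nat_diff add_ac)
  moreover have "Gamma (b + 1) \<le> Gamma (b + 1) * fact (k - 1)"
    using assms by simp
  ultimately have "Gamma (b + 1) \<le> Gamma (real k + b)"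
    by linarith
  then have "Gamma (b + 1) * \<bar>s\<bar> ^ k \<le> Gamma (real k + b) * \<bar>s\<bar> ^ k"
    by (rule mult_right_mono) simp
  then show "norm (s ^ k / (fact k * Gamma (real k + b)))
               \<le> (1 / Gamma (b + 1)) * (inverse (fact k) * \<bar>s\<bar> ^ k)"
    using assms by (simp add: abs_mult power_abs field_simps add_ac)
qed

lemma bessel_series_pos:
  assumes "0 < b" and "0 \<le> s"
  shows "0 < bessel_series b s"
  unfolding bessel_series_def
  using assms by (intro suminf_pos2[where i = 0] summable_bessel_series) auto

lemma sum_reflection_symmetric_nonneg:
  fixes w :: "nat \<Rightarrow> real"
  assumes symmetric: "\<And>i. i \<le> m \<Longrightarrow> w (m - i) = w i"
    and nonneg: "\<And>i. i \<le> m \<Longrightarrow> 0 \<le> w i"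
  shows "0 \<le> (\<Sum>i\<le>m. (real m - 2 * real i) * (real m - real i) * w i)"
proof -
  define f where "f i = (real m - 2 * real i) * (real m - real i) * w i" for i
  have "(\<Sum>i\<le>m. f i) = (\<Sum>i\<le>m. f (m - i))"
    using sum.atLeastAtMost_rev[of f 0 m] by (simp add: atLeast0AtMost)
  also have "\<dots> = (\<Sum>i\<le>m. (2 * real i - real m) * real i * w i)"
    by (rule sum.cong) (auto simp: f_def symmetric of_nat_diff)
  finally have "2 * (\<Sum>i\<le>m. f i) = (\<Sum>i\<le>m. f i + (2 * real i - real m) * real i * w i)"
    by (simp add: sum.distrib)
  also have "\<dots> = (\<Sum>i\<le>m. (real m - 2 * real i)\<^sup>2 * w i)"
    by (rule sum.cong) (auto simp: f_def power2_eq_square algebra_simps)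
  also have "\<dots> \<ge> 0"
    using nonneg by (intro sum_nonneg) auto
  finally show ?thesis
    by (simp add: f_def)
qed

lemma bessel_cauchy_coeff_diff:
  fixes A s :: real and i n :: nat
  assumes "0 < A" and "i \<le> n"
  shows "s ^ i / (fact i * Gamma (real i + (A + 1)))
           * (s ^ (n - i) / (fact (n - i) * Gamma (real (n - i) + (A + 1))))
         - s ^ i / (fact i * Gamma (real i + A))
           * (s ^ (n - i) / (fact (n - i) * Gamma (real (n - i) + (A + 2))))
       = s ^ n * ((real (Suc n) - 2 * real i) * (real (Suc n) - real i)
           / (fact i * fact (Suc n - i) * Gamma (real i + A + 1) * Gamma (real (Suc n - i) + A + 1)))"
proof -
  \<comment> \<open>Opaque names for the Gamma values and linear factors keep \<open>field_simps\<close> from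
     multiplying out the denominators, whose positivity it could then no longer see.\<close>
  define j where "j = n - i"
  define gi where "gi = Gamma (real i + A)"
  define gj where "gj = Gamma (real j + (A + 1))"
  define u where "u = real i + A"
  define v where "v = real j + A + 1"
  define w where "w = real j + 1"
  have n: "n = i + j" and Suc_n_minus: "Suc n - i = Suc j"
    using assms(2) by (simp_all add: j_def)
  have Gamma_i: "Gamma (real i + (A + 1)) = u * gi" "Gamma (real i + A + 1) = u * gi"
    using Gamma_plus1_pos[of "real i + A"] assms(1) by (simp_all add: u_def gi_def add_ac)
  have Gamma_j: "Gamma (real j + (A + 2)) = v * gj" "Gamma (real (Suc j) + A + 1) = v * gj"
    using Gamma_plus1_pos[of "real j + A + 1"] assms(1) by (simp_all add: v_def gj_def add_ac)
  have coeffs: "real (Suc n) - 2 * real i = v - u" "real (Suc n) - real i = w"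
    by (simp_all add: n u_def v_def w_def)
  have fact_Suc_j: "fact (Suc j) = w * fact j"
    by (simp add: w_def algebra_simps)
  have "0 < gi" "0 < gj" "0 < u" "0 < v" "0 < w"
    using assms(1) by (simp_all add: gi_def gj_def u_def v_def w_def)
  then show ?thesis
    unfolding Suc_n_minus j_def[symmetric] gi_def[symmetric] gj_def[symmetric] Gamma_i Gamma_j coeffs fact_Suc_j
    by (simp add: n power_add field_simps)
qed

lemma bessel_series_turan:
  assumes "0 < A" and "0 \<le> s"
  shows "bessel_series A s * bessel_series (A + 2) s < (bessel_series (A + 1) s)\<^sup>2"
proof -
  define a where "a b k = s ^ k / (fact k * Gamma (real k + b))" for b k
  define w where "w n i = 1 / (fact i * fact (Suc n - i) * Gamma (real i + A + 1)
                                 * Gamma (real (Suc n - i) + A + 1))" for n i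
  define c where "c n = (\<Sum>i\<le>n. a (A + 1) i * a (A + 1) (n - i) - a A i * a (A + 2) (n - i))" for n
  have summable_norm: "summable (\<lambda>k. norm (a b k))" if "0 < b" for b
    using summable_bessel_series[OF that, of s] assms(2) that by (simp add: a_def)
  have "(\<lambda>n. \<Sum>i\<le>n. a (A + 1) i * a (A + 1) (n - i)) sums (bessel_series (A + 1) s)\<^sup>2"
    using Cauchy_product_sums[OF summable_norm summable_norm] assms(1)
    by (simp add: bessel_series_def a_def power2_eq_square)
  moreover have "(\<lambda>n. \<Sum>i\<le>n. a A i * a (A + 2) (n - i)) sums (bessel_series A s * bessel_series (A + 2) s)"
    using Cauchy_product_sums[OF summable_norm summable_norm] assms(1)
    by (simp add: bessel_series_def a_def)
  ultimately have c_sums: "c sums ((bessel_series (A + 1) s)\<^sup>2 - bessel_series A s * bessel_series (A + 2) s)"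
    unfolding c_def sum_subtractf by (rule sums_diff)
  have c_eq: "c n = s ^ n * (\<Sum>i\<le>Suc n. (real (Suc n) - 2 * real i) * (real (Suc n) - real i) * w n i)"
    for n
  proof -
    have "c n = (\<Sum>i\<le>n. s ^ n * ((real (Suc n) - 2 * real i) * (real (Suc n) - real i) * w n i))"
      unfolding c_def
    proof (rule sum.cong[OF refl])
      fix i assume "i \<in> {..n}"
      then show "a (A + 1) i * a (A + 1) (n - i) - a A i * a (A + 2) (n - i)
                   = s ^ n * ((real (Suc n) - 2 * real i) * (real (Suc n) - real i) * w n i)"
        using bessel_cauchy_coeff_diff[OF assms(1), of i n s] by (simp add: a_def w_def)
    qed
    then show ?thesis
      by (simp add: sum_distrib_left) \<comment> \<open>the extra term \<open>i = Suc n\<close> vanishes\<close>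
  qed
  have c_nonneg: "0 \<le> c n" for n
  proof -
    have "0 \<le> (\<Sum>i\<le>Suc n. (real (Suc n) - 2 * real i) * (real (Suc n) - real i) * w n i)"
      using assms(1) by (intro sum_reflection_symmetric_nonneg) (auto simp: w_def of_nat_diff)
    then show ?thesis
      unfolding c_eq using assms(2) by simp
  qed
  have "0 < c 0"
    unfolding c_eq using assms(1) by (simp add: w_def)
  then have "0 < suminf c"
    by (rule suminf_pos2[OF sums_summable[OF c_sums] c_nonneg])
  then show ?thesis
    using sums_unique[OF c_sums] by simp
qed

definition poisson_weight :: "real \<Rightarrow> nat \<Rightarrow> real" where
  "poisson_weight x n = exp (- x) * x ^ n / fact n"

definition marcum_series :: "real \<Rightarrow> real \<Rightarrow> real \<Rightarrow> real" where
  "marcum_series mu x y = (\<Sum>n. poisson_weight x n * reg_lower_gamma (mu + real n) y)"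

lemma poisson_weight_nonneg: "0 \<le> x \<Longrightarrow> 0 \<le> poisson_weight x n"
  by (simp add: poisson_weight_def)

lemma poisson_weight_sums: "poisson_weight x sums 1"
proof -
  have "(\<lambda>n. exp (- x) * (x ^ n /\<^sub>R fact n)) sums (exp (- x) * exp x)"
    by (intro sums_mult exp_converges)
  moreover have "(\<lambda>n. exp (- x) * (x ^ n /\<^sub>R fact n)) = poisson_weight x"
    by (simp add: poisson_weight_def fun_eq_iff divide_inverse_commute)
  ultimately show ?thesis
    by (simp add: exp_add[symmetric])
qed

lemma marcum_series_term_le:
  assumes "0 < mu" and "0 \<le> x" and "0 \<le> y"
  shows "poisson_weight x n * reg_lower_gamma (mu + real n) y \<le> reg_lower_gamma mu y * poisson_weight x n"
  using reg_lower_gamma_add_nat_le[OF assms(1,3), of n] poisson_weight_nonneg[OF assms(2), of n]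
  by (metis mult.commute mult_left_mono)

lemma summable_marcum_series:
  assumes "0 < mu" and "0 \<le> x" and "0 \<le> y"
  shows "summable (\<lambda>n. poisson_weight x n * reg_lower_gamma (mu + real n) y)"
proof (rule summable_comparison_test'[where N = 0])
  show "summable (\<lambda>n. reg_lower_gamma mu y * poisson_weight x n)"
    using poisson_weight_sums by (intro summable_mult sums_summable)
  fix n
  have "0 \<le> poisson_weight x n * reg_lower_gamma (mu + real n) y"
    using assms by (intro mult_nonneg_nonneg poisson_weight_nonneg reg_lower_gamma_nonneg) auto
  then show "norm (poisson_weight x n * reg_lower_gamma (mu + real n) y)
               \<le> reg_lower_gamma mu y * poisson_weight x n"
    using marcum_series_term_le[OF assms] by simp
qed

lemma marcum_series_nonneg:
  "0 < mu \<Longrightarrow> 0 \<le> x \<Longrightarrow> 0 \<le> y \<Longrightarrow> 0 \<le> marcum_series mu x y"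
  unfolding marcum_series_def
  by (intro suminf_nonneg summable_marcum_series mult_nonneg_nonneg poisson_weight_nonneg
      reg_lower_gamma_nonneg) auto

lemma marcum_series_le:
  assumes "0 < mu" and "0 \<le> x" and "0 \<le> y"
  shows "marcum_series mu x y \<le> reg_lower_gamma mu y"
proof -
  have "marcum_series mu x y \<le> (\<Sum>n. reg_lower_gamma mu y * poisson_weight x n)"
    unfolding marcum_series_def using poisson_weight_sums
    by (intro suminf_le marcum_series_term_le[OF assms] summable_marcum_series[OF assms]
        summable_mult sums_summable)
  also have "\<dots> = reg_lower_gamma mu y"
    using poisson_weight_sums by (simp add: suminf_mult sums_iff)
  finally show ?thesis .
qed

lemma marcum_series_diff:
  assumes "0 < mu" and "0 \<le> x" and "0 < y"
  shows "marcum_series mu x y - marcum_series (mu + 1) x y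
           = exp (- x) * exp (- y) * y powr mu * bessel_series (mu + 1) (x * y)"
proof -
  have "marcum_series mu x y - marcum_series (mu + 1) x y
          = (\<Sum>n. poisson_weight x n * (reg_lower_gamma (mu + real n) y - reg_lower_gamma (mu + real n + 1) y))"
    unfolding marcum_series_def
    using summable_marcum_series[of mu x y] summable_marcum_series[of "mu + 1" x y] assms
    by (subst suminf_diff) (auto simp: algebra_simps)
  also have "\<dots> = (\<Sum>n. exp (- x) * exp (- y) * y powr mu * ((x * y) ^ n / (fact n * Gamma (real n + (mu + 1)))))"
  proof (rule suminf_cong)
    fix n
    have "y powr (mu + real n) = y powr mu * y ^ n"
      using assms(3) by (simp add: powr_add powr_realpow)
    then show "poisson_weight x n * (reg_lower_gamma (mu + real n) y - reg_lower_gamma (mu + real n + 1) y)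
                 = exp (- x) * exp (- y) * y powr mu * ((x * y) ^ n / (fact n * Gamma (real n + (mu + 1))))"
      using reg_lower_gamma_diff[of "mu + real n" y] assms
      by (simp add: poisson_weight_def power_mult_distrib add_ac)
  qed
  also have "\<dots> = exp (- x) * exp (- y) * y powr mu * bessel_series (mu + 1) (x * y)"
    unfolding bessel_series_def using summable_bessel_series[of "mu + 1" "x * y"] assms
    by (subst suminf_mult) auto
  finally show ?thesis .
qed

lemma marcum_series_tendsto_zero:
  assumes "0 < mu" and "0 \<le> x" and "0 < y"
  shows "(\<lambda>k. marcum_series (mu + real k) x y) \<longlonglongrightarrow> 0"
proof (rule tendsto_sandwich[where f = "\<lambda>_. 0"])
  show "\<forall>\<^sub>F k in sequentially. 0 \<le> marcum_series (mu + real k) x y"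
    using assms by (intro always_eventually allI marcum_series_nonneg) auto
  show "\<forall>\<^sub>F k in sequentially. marcum_series (mu + real k) x y
          \<le> y powr mu / Gamma (mu + 1) * (inverse (fact k) * y ^ k)"
  proof (intro always_eventually allI)
    fix k :: nat
    have "Gamma (mu + 1) * fact k \<le> Gamma (mu + real k + 1)"
      using Gamma_add_nat_ge[of "mu + 1" k] assms(1) by (simp add: add_ac)
    then have "y powr (mu + real k) / Gamma (mu + real k + 1)
                 \<le> y powr (mu + real k) / (Gamma (mu + 1) * fact k)"
      using assms by (intro divide_left_mono) auto
    also have "\<dots> = y powr mu / Gamma (mu + 1) * (inverse (fact k) * y ^ k)"
      using assms(3) by (simp add: powr_add powr_realpow field_simps)
    finally show "marcum_series (mu + real k) x y \<le> y powr mu / Gamma (mu + 1) * (inverse (fact k) * y ^ k)"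
      using marcum_series_le[of "mu + real k" x y] reg_lower_gamma_le[of "mu + real k" y] assms
      by simp
  qed
  show "(\<lambda>k. y powr mu / Gamma (mu + 1) * (inverse (fact k) * y ^ k)) \<longlonglongrightarrow> 0"
    by (intro tendsto_mult_right_zero summable_LIMSEQ_zero summable_exp)
qed simp

lemma marcum_series_decreasing:
  assumes "0 < mu" and "0 \<le> x" and "0 < y"
  shows "marcum_series (mu + 1) x y < marcum_series mu x y"
proof -
  have "0 < exp (- x) * exp (- y) * y powr mu * bessel_series (mu + 1) (x * y)"
    using assms by (intro mult_pos_pos bessel_series_pos) auto
  then show ?thesis
    using marcum_series_diff[OF assms] by linarith
qed

lemma marcum_series_diff_log_concave:
  assumes "0 < mu" and "0 \<le> x" and "0 < y"
  shows "(marcum_series mu x y - marcum_series (mu + 1) x y)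
           * (marcum_series (mu + 2) x y - marcum_series (mu + 3) x y)
         < (marcum_series (mu + 1) x y - marcum_series (mu + 2) x y)\<^sup>2"
proof -
  define K where "K = exp (- x) * exp (- y) * y powr mu"
  define B where "B b = bessel_series b (x * y)" for b
  have "marcum_series mu x y - marcum_series (mu + 1) x y = K * B (mu + 1)"
    "marcum_series (mu + 1) x y - marcum_series (mu + 2) x y = K * y * B (mu + 2)"
    "marcum_series (mu + 2) x y - marcum_series (mu + 3) x y = K * y\<^sup>2 * B (mu + 3)"
    using marcum_series_diff[of mu x y] marcum_series_diff[of "mu + 1" x y]
      marcum_series_diff[of "mu + 2" x y] assms
    by (simp_all add: K_def B_def powr_add power2_eq_square add_ac)
  moreover have "B (mu + 1) * B (mu + 3) < (B (mu + 2))\<^sup>2"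
    using bessel_series_turan[of "mu + 1" "x * y"] assms by (simp add: B_def add_ac)
  moreover have "0 < (K * y)\<^sup>2"
    using assms by (simp add: K_def)
  ultimately show ?thesis
    using mult_strict_left_mono[of "B (mu + 1) * B (mu + 3)" "(B (mu + 2))\<^sup>2" "(K * y)\<^sup>2"]
    by (simp add: power2_eq_square mult_ac)
qed

lemma besselI_term_eq:
  assumes "0 < x" and "0 < t"
  shows "x powr ((1 - mu) / 2) * t powr ((mu - 1) / 2) * exp (- t - x)
           * ((2 * sqrt (x * t) / 2) powr (2 * real k + (mu - 1)) / (fact k * Gamma (real k + (mu - 1) + 1)))
         = poisson_weight x k * (t powr (mu + real k - 1) * exp (- t)) / Gamma (mu + real k)"
proof -
  define e where "e = 2 * real k + (mu - 1)"
  have "(2 * sqrt (x * t) / 2) powr e = x powr (e / 2) * t powr (e / 2)"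
    using assms by (simp add: powr_half_sqrt[symmetric] powr_powr powr_mult)
  moreover have "x powr ((1 - mu) / 2) * x powr (e / 2) = x ^ k"
    using assms(1) by (simp add: powr_add[symmetric] e_def field_simps powr_realpow)
  moreover have "t powr ((mu - 1) / 2) * t powr (e / 2) = t powr (mu + real k - 1)"
  proof -
    have "(mu - 1) / 2 + e / 2 = mu + real k - 1"
      by (simp add: e_def field_simps)
    then show ?thesis
      by (simp add: powr_add[symmetric])
  qed
  moreover have "real k + (mu - 1) + 1 = mu + real k"
    by simp
  ultimately show ?thesis
    unfolding e_def[symmetric]
    by (simp add: poisson_weight_def exp_diff exp_minus field_simps)
qed

lemma summable_bessel_integrand:
  assumes "0 < mu" and "0 < t"
  shows "summable (\<lambda>k. poisson_weight x k * (t powr (mu + real k - 1) * exp (- t)) / Gamma (mu + real k))"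
proof -
  have "poisson_weight x k * (t powr (mu + real k - 1) * exp (- t)) / Gamma (mu + real k)
          = exp (- x) * t powr (mu - 1) * exp (- t) * ((x * t) ^ k / (fact k * Gamma (real k + mu)))" for k
  proof -
    have "t powr (mu + real k - 1) = t powr (mu - 1) * t ^ k"
      using assms(2) by (simp add: powr_add[symmetric] powr_realpow[symmetric] algebra_simps)
    then show ?thesis
      by (simp add: poisson_weight_def power_mult_distrib algebra_simps)
  qed
  then show ?thesis
    using summable_mult[OF summable_bessel_series[OF assms(1), of "x * t"],
        of "exp (- x) * t powr (mu - 1) * exp (- t)"]
    by simp
qed

lemma bessel_integrand_sums:
  assumes "0 < mu" and "0 < x" and "0 < t"
  shows "(\<lambda>k. poisson_weight x k * (t powr (mu + real k - 1) * exp (- t)) / Gamma (mu + real k))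
           sums (x powr ((1 - mu) / 2) * (t powr ((mu - 1) / 2) * exp (- t - x)
                   * besselI (mu - 1) (2 * sqrt (x * t))))"
proof -
  define C where "C = x powr ((1 - mu) / 2) * t powr ((mu - 1) / 2) * exp (- t - x)"
  define b where "b k = (2 * sqrt (x * t) / 2) powr (2 * real k + (mu - 1))
                          / (fact k * Gamma (real k + (mu - 1) + 1))" for k
  have "0 < C"
    using assms by (simp add: C_def)
  have terms: "poisson_weight x k * (t powr (mu + real k - 1) * exp (- t)) / Gamma (mu + real k) = C * b k" for k
    using besselI_term_eq[OF assms(2,3)] by (simp add: C_def b_def)
  have "summable (\<lambda>k. C * b k)"
    using summable_bessel_integrand[OF assms(1,3), of x] unfolding terms .
  then have "summable b"
    using \<open>0 < C\<close> summable_cmult_iff[of C b] by simp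
  then have "(\<lambda>k. C * b k) sums (C * besselI (mu - 1) (2 * sqrt (x * t)))"
    unfolding besselI_def b_def[symmetric] by (intro sums_mult summable_sums)
  then show ?thesis
    unfolding terms by (simp add: C_def mult_ac)
qed

lemma marcumP_eq_marcum_series:
  assumes "0 < mu" and "0 \<le> x" and "0 \<le> y"
  shows "marcumP mu x y = marcum_series mu x y"
proof (cases "x = 0")
  case True
  then have "(\<lambda>n. poisson_weight x n * reg_lower_gamma (mu + real n) y)
               = (\<lambda>n. if n = 0 then reg_lower_gamma (mu + real n) y else 0)"
    by (auto simp: poisson_weight_def fun_eq_iff)
  then have "marcum_series mu x y = reg_lower_gamma mu y"
    unfolding marcum_series_def using sums_single[of 0 "\<lambda>n. reg_lower_gamma (mu + real n) y"]
    by (simp add: sums_iff)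
  with True show ?thesis
    by (simp add: marcumP_def reg_lower_gamma_def)
next
  case False
  with assms(2) have "0 < x"
    by simp
  define u where "u k t = poisson_weight x k * (t powr (mu + real k - 1) * exp (- t)) / Gamma (mu + real k)"
    for k t
  define G where "G t = x powr ((1 - mu) / 2) * (t powr ((mu - 1) / 2) * exp (- t - x)
                          * besselI (mu - 1) (2 * sqrt (x * t)))" for t
  have u_integrable: "u k integrable_on {0..y}" for k
    unfolding u_def using assms
    by (intro integrable_on_divide integrable_on_mult_right lower_gamma_integrable) auto
  have partial_integral: "integral {0..y} (\<lambda>t. \<Sum>k<N. u k t)
                            = (\<Sum>k<N. poisson_weight x k * reg_lower_gamma (mu + real k) y)" for N
  proof -
    have "integral {0..y} (u k) = poisson_weight x k * reg_lower_gamma (mu + real k) y" for k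
      by (simp add: u_def[abs_def] reg_lower_gamma_def lower_gamma_def)
    then show ?thesis
      using u_integrable by (subst integral_sum) auto
  qed
  have "G integrable_on {0..y} \<and>
          (\<lambda>N. integral {0..y} (\<lambda>t. \<Sum>k<N. u k t)) \<longlonglongrightarrow> integral {0..y} G"
  proof (rule monotone_convergence_increasing)
    show "(\<lambda>t. \<Sum>k<N. u k t) integrable_on {0..y}" for N
      using u_integrable by (intro integrable_sum) auto
    show "(\<Sum>k<N. u k t) \<le> (\<Sum>k<Suc N. u k t)" if "t \<in> {0..y}" for N t
      using that assms by (simp add: u_def poisson_weight_def)
    show "(\<lambda>N. \<Sum>k<N. u k t) \<longlonglongrightarrow> G t" if "t \<in> {0..y}" for t
    proof (cases "t = 0")
      case True
      then show ?thesis
        by (simp add: u_def G_def)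
    next
      case False
      with that have "0 < t"
        by simp
      then show ?thesis
        using bessel_integrand_sums[OF assms(1) \<open>0 < x\<close>] by (simp add: u_def G_def sums_def)
    qed
    have "\<bar>\<Sum>k<N. poisson_weight x k * reg_lower_gamma (mu + real k) y\<bar> \<le> marcum_series mu x y" for N
      unfolding marcum_series_def using assms summable_marcum_series[OF assms]
      by (subst abs_of_nonneg)
        (auto intro!: sum_nonneg sum_le_suminf mult_nonneg_nonneg poisson_weight_nonneg
          reg_lower_gamma_nonneg)
    then show "bounded (range (\<lambda>N. integral {0..y} (\<lambda>t. \<Sum>k<N. u k t)))"
      unfolding partial_integral bounded_iff by auto
  qed
  moreover have "(\<lambda>N. integral {0..y} (\<lambda>t. \<Sum>k<N. u k t)) \<longlonglongrightarrow> marcum_series mu x y"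
    unfolding partial_integral marcum_series_def
    using summable_LIMSEQ[OF summable_marcum_series[OF assms]] .
  ultimately have "integral {0..y} G = marcum_series mu x y"
    using LIMSEQ_unique by blast
  then show ?thesis
    using False by (simp add: marcumP_def G_def[abs_def])
qed

theorem corollary4:
  fixes mu x y :: real
  assumes "mu > 0" and "x \<ge> 0" and "y > 0"
  shows "(marcumP (mu + 1) x y)\<^sup>2 - marcumP mu x y * marcumP (mu + 2) x y > 0"
proof -
  define p where "p k = marcum_series (mu + real k) x y" for k
  have "p 0 * p 2 < (p 1)\<^sup>2"
  proof (rule turan_of_log_concave_differences)
    show "p (Suc k) < p k" for k
      using marcum_series_decreasing[of "mu + real k" x y] assms by (simp add: p_def add_ac)
    show "(p k - p (Suc k)) * (p (Suc (Suc k)) - p (Suc (Suc (Suc k))))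
            < (p (Suc k) - p (Suc (Suc k)))\<^sup>2" for k
      using marcum_series_diff_log_concave[of "mu + real k" x y] assms by (simp add: p_def add_ac)
    show "p \<longlonglongrightarrow> 0"
      unfolding p_def using marcum_series_tendsto_zero[OF assms] .
  qed
  moreover have "marcumP mu x y = p 0" "marcumP (mu + 1) x y = p 1" "marcumP (mu + 2) x y = p 2"
    unfolding p_def using assms by (simp_all add: marcumP_eq_marcum_series)
  ultimately show ?thesis
    by simp
qed

end
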